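(* For any integer $n\ge4$, the $n$-cycle satisfies $\beta(C_n)=n/2$, whereas its complement satisfies $\beta(\overline{C_n})=n/\lfloor n/2\rfloor$. In both cases $\beta_1=\lceil\beta\rceil$ while $\alpha=\lfloor\beta\rfloor$.
   Context: For an undirected graph $G$ on vertex set $[n]$, consider the index coding problem: a server holds messages $x_1,\dots,x_n\in\Sigma$ ($|\Sigma|>1$), receiver $i$ wants $x_i$ and knows $x_j$ for every neighbor $j$ of $i$. A solution is an encoding $\mathcal{E}:\Sigma^n\to\Sigma_P$ from which each receiver can recover its message given its side information, for all message values. $\beta_t(G)$ is the minimum of $\lceil\log_2|\Sigma_P|\rceil$ over solutions with $|\Sigma|=2^t$; $\beta_1(G)$ is this quantity for $t=1$ and $\beta(G)=\lim_t\beta_t(G)/t=\inf_t\beta_t(G)/t$. $\alpha(G)$ is the independence number and $\overline{C_n}$ is the complement of the $n$-cycle $C_n$. *)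

theory Defs
  imports Complex_Main "HOL-Library.FuncSet"
begin

text \<open>A graph on vertex set [n] = {0..<n} is given by n and a symmetric,
irreflexive adjacency relation G (only pairs inside {0..<n} matter).\<close>

definition cycle_graph :: "nat \<Rightarrow> nat \<Rightarrow> nat \<Rightarrow> bool" where
  "cycle_graph n i j \<longleftrightarrow> i < n \<and> j < n \<and> i \<noteq> j \<and>
      (j = (i + 1) mod n \<or> i = (j + 1) mod n)"

definition compl_graph :: "nat \<Rightarrow> (nat \<Rightarrow> nat \<Rightarrow> bool) \<Rightarrow> nat \<Rightarrow> nat \<Rightarrow> bool" where
  "compl_graph n G i j \<longleftrightarrow> i < n \<and> j < n \<and> i \<noteq> j \<and> \<not> G i j"

definition indep_set :: "nat \<Rightarrow> (nat \<Rightarrow> nat \<Rightarrow> bool) \<Rightarrow> nat set \<Rightarrow> bool" where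
  "indep_set n G S \<longleftrightarrow> S \<subseteq> {0..<n} \<and> (\<forall>i\<in>S. \<forall>j\<in>S. \<not> G i j)"

definition alpha :: "nat \<Rightarrow> (nat \<Rightarrow> nat \<Rightarrow> bool) \<Rightarrow> nat" where
  "alpha n G = Max (card ` {S. indep_set n G S})"

text \<open>Messages: x_i in the alphabet {0..<2^t}, i.e. |Sigma| = 2^t.
 Encoding E into the public alphabet P (a finite set); receiver i has
 decoder D i taking the codeword and its side information (x restricted
 to the neighbours of i).\<close>

definition messages :: "nat \<Rightarrow> nat \<Rightarrow> (nat \<Rightarrow> nat) set" where
  "messages n t = {0..<n} \<rightarrow>\<^sub>E {0..<2^t}"

definition is_ic_solution ::
  "nat \<Rightarrow> (nat \<Rightarrow> nat \<Rightarrow> bool) \<Rightarrow> nat \<Rightarrow> nat set \<Rightarrow> ((nat \<Rightarrow> nat) \<Rightarrow> nat) \<Rightarrow> bool" where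
  "is_ic_solution n G t P E \<longleftrightarrow> finite P \<and> E ` messages n t \<subseteq> P \<and>
     (\<exists>D :: nat \<Rightarrow> nat \<Rightarrow> (nat \<Rightarrow> nat) \<Rightarrow> nat.
        \<forall>i<n. \<forall>x\<in>messages n t. D i (E x) (restrict x {j. G i j}) = x i)"

definition beta_t :: "nat \<Rightarrow> (nat \<Rightarrow> nat \<Rightarrow> bool) \<Rightarrow> nat \<Rightarrow> nat" where
  "beta_t n G t = (LEAST k. \<exists>P E. is_ic_solution n G t P E \<and>
                      k = nat \<lceil>log 2 (real (card P))\<rceil>)"

definition beta :: "nat \<Rightarrow> (nat \<Rightarrow> nat \<Rightarrow> bool) \<Rightarrow> real" where
  "beta n G = (INF t\<in>{1::nat..}. real (beta_t n G t) / real t)"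

end

theory Submission
  imports Defs
begin

text \<open>
  Lower bounds: fix a solution, let the messages \<open>x\<close> be uniformly random, and put
  \<open>h A = H(E x, x\<^sub>A)\<close>. Then \<open>h\<close> is monotone and submodular, \<open>h {0..<n} = t n\<close>,
  \<open>h A \<le> H(E x) + t |A|\<close>, and \<open>h A = h B\<close> whenever every vertex of \<open>B - A\<close> has all its
  neighbours in \<open>A\<close>, because its message can be decoded. Summing submodularity over all
  rotations of the windows \<open>{r, r + s, \<dots>, r + (k - 1) s}\<close> of \<open>\<int>/n\<close> shows that the window sums
  \<open>F k\<close> are concave in \<open>k\<close>. Comparing slopes of \<open>F\<close> at both ends (with \<open>s = 1\<close> for odd
  cycles, \<open>s = 2\<close> for complements of odd cycles; a single decodable set suffices for even \<open>n\<close>)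
  gives \<open>log\<^sub>2 |\<Sigma>\<^sub>P| \<ge> H(E x) \<ge> t n / 2\<close>, respectively \<open>t n / \<lfloor>n/2\<rfloor>\<close>.

  Upper bounds come from linear codes over GF(2): XORs of pairs of adjacent vertices
  (\<open>\<beta>\<^sub>1(C\<^sub>n) \<le> \<lceil>n/2\<rceil>\<close>), a cyclically shifted XOR code with two bits per vertex
  (\<open>\<beta>\<^sub>2(C\<^sub>n) \<le> n\<close>), one XOR per colour class of a proper 2- or 3-colouring of \<open>C\<^sub>n\<close> for the
  complement, and for \<open>n = 2 m + 1\<close> a code with \<open>t = m\<close> built from the progressions
  \<open>c, c + 2, \<dots>, c + 2 (m - 1)\<close>, which are independent in \<open>C\<^sub>n\<close>.
\<close>

section \<open>Entropy of a function of a uniformly distributed variable\<close>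

definition fiber_card :: "'a set \<Rightarrow> ('a \<Rightarrow> 'b) \<Rightarrow> 'a \<Rightarrow> nat" where
  "fiber_card \<Omega> f x = card {y\<in>\<Omega>. f y = f x}"

text \<open>The Shannon entropy of \<open>f X\<close> for \<open>X\<close> uniformly distributed on \<open>\<Omega>\<close>.\<close>
definition uniform_entropy :: "'a set \<Rightarrow> ('a \<Rightarrow> 'b) \<Rightarrow> real" where
  "uniform_entropy \<Omega> f = (\<Sum>x\<in>\<Omega>. log 2 (card \<Omega> / fiber_card \<Omega> f x)) / card \<Omega>"

lemma fiber_card_ge_1: "finite \<Omega> \<Longrightarrow> x \<in> \<Omega> \<Longrightarrow> 1 \<le> fiber_card \<Omega> f x"
  unfolding fiber_card_def by (auto intro!: Suc_leI simp: card_gt_0_iff)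

lemma real_fiber_card_pos: "finite \<Omega> \<Longrightarrow> x \<in> \<Omega> \<Longrightarrow> 0 < real (fiber_card \<Omega> f x)"
  using fiber_card_ge_1[of \<Omega> x f] by simp

lemma real_fiber_card_eq_sum:
  "finite \<Omega> \<Longrightarrow> real (fiber_card \<Omega> f x) = (\<Sum>y\<in>\<Omega>. of_bool (f y = f x))"
  unfolding fiber_card_def by (simp add: Collect_conj_eq Int_commute)

lemma sum_fiber_inverse_fiber_card:
  assumes "finite \<Omega>" "x \<in> \<Omega>"
  shows "(\<Sum>y\<in>{y\<in>\<Omega>. f y = f x}. 1 / real (fiber_card \<Omega> f y)) = 1"
proof -
  have "(\<Sum>y\<in>{y\<in>\<Omega>. f y = f x}. 1 / real (fiber_card \<Omega> f y))
      = (\<Sum>y\<in>{y\<in>\<Omega>. f y = f x}. 1 / real (fiber_card \<Omega> f x))"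
    by (intro sum.cong) (auto simp: fiber_card_def)
  also have "\<dots> = 1"
    using fiber_card_ge_1[OF assms, of f] by (simp add: fiber_card_def)
  finally show ?thesis .
qed

lemma sum_inverse_fiber_card:
  assumes "finite \<Omega>"
  shows "(\<Sum>x\<in>\<Omega>. 1 / real (fiber_card \<Omega> f x)) = card (f ` \<Omega>)"
proof -
  have "(\<Sum>x\<in>\<Omega>. 1 / real (fiber_card \<Omega> f x))
      = (\<Sum>v\<in>f ` \<Omega>. \<Sum>x\<in>{x\<in>\<Omega>. f x = v}. 1 / real (fiber_card \<Omega> f x))"
    using assms by (rule sum.image_gen)
  also have "\<dots> = (\<Sum>v\<in>f ` \<Omega>. 1)"
    using assms by (intro sum.cong) (auto simp: sum_fiber_inverse_fiber_card)
  finally show ?thesis by simp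
qed

text \<open>Jensen's inequality for the logarithm, via \<open>ln y \<le> y - 1\<close>.\<close>
lemma sum_log_le_zero:
  fixes r :: "'a \<Rightarrow> real"
  assumes "finite \<Omega>" and pos: "\<And>x. x \<in> \<Omega> \<Longrightarrow> 0 < r x"
    and sum_le: "(\<Sum>x\<in>\<Omega>. r x) \<le> card \<Omega>"
  shows "(\<Sum>x\<in>\<Omega>. log 2 (r x)) \<le> 0"
proof -
  have "(\<Sum>x\<in>\<Omega>. log 2 (r x)) \<le> (\<Sum>x\<in>\<Omega>. (r x - 1) / ln 2)"
    using pos ln_le_minus_one by (intro sum_mono) (simp add: log_def divide_right_mono)
  also have "\<dots> = ((\<Sum>x\<in>\<Omega>. r x) - card \<Omega>) / ln 2"
    by (simp add: diff_divide_distrib sum_divide_distrib sum_subtractf)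
  also have "\<dots> \<le> 0"
    using sum_le by (intro divide_nonpos_pos) auto
  finally show ?thesis .
qed

lemma uniform_entropy_eq:
  assumes "finite \<Omega>"
  shows "uniform_entropy \<Omega> f
           = log 2 (card \<Omega>) - (\<Sum>x\<in>\<Omega>. log 2 (fiber_card \<Omega> f x)) / card \<Omega>"
proof (cases "\<Omega> = {}")
  case True
  then show ?thesis unfolding uniform_entropy_def by (simp add: log_def)
next
  case False
  then have card_pos: "card \<Omega> > 0" using assms by auto
  have "log 2 (card \<Omega> / fiber_card \<Omega> f x) = log 2 (card \<Omega>) - log 2 (fiber_card \<Omega> f x)"
    if "x \<in> \<Omega>" for x
    using card_pos real_fiber_card_pos[OF assms that, of f] by (simp add: log_divide)
  then have "(\<Sum>x\<in>\<Omega>. log 2 (card \<Omega> / fiber_card \<Omega> f x))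
      = (\<Sum>x\<in>\<Omega>. log 2 (card \<Omega>) - log 2 (fiber_card \<Omega> f x))"
    by (intro sum.cong) auto
  then show ?thesis
    unfolding uniform_entropy_def using card_pos by (simp add: sum_subtractf field_simps)
qed

lemma uniform_entropy_cong:
  assumes "\<And>x y. x \<in> \<Omega> \<Longrightarrow> y \<in> \<Omega> \<Longrightarrow> f x = f y \<longleftrightarrow> g x = g y"
  shows "uniform_entropy \<Omega> f = uniform_entropy \<Omega> g"
proof -
  have "fiber_card \<Omega> f x = fiber_card \<Omega> g x" if "x \<in> \<Omega>" for x
    unfolding fiber_card_def using assms that by (intro arg_cong[where f=card]) auto
  then have "(\<Sum>x\<in>\<Omega>. log 2 (card \<Omega> / fiber_card \<Omega> f x))
           = (\<Sum>x\<in>\<Omega>. log 2 (card \<Omega> / fiber_card \<Omega> g x))"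
    by (intro sum.cong) auto
  then show ?thesis unfolding uniform_entropy_def by simp
qed

lemma uniform_entropy_mono:
  assumes fin: "finite \<Omega>"
    and refines: "\<And>x y. x \<in> \<Omega> \<Longrightarrow> y \<in> \<Omega> \<Longrightarrow> g x = g y \<Longrightarrow> f x = f y"
  shows "uniform_entropy \<Omega> f \<le> uniform_entropy \<Omega> g"
proof -
  have "log 2 (fiber_card \<Omega> g x) \<le> log 2 (fiber_card \<Omega> f x)" if "x \<in> \<Omega>" for x
  proof -
    have "{y\<in>\<Omega>. g y = g x} \<subseteq> {y\<in>\<Omega>. f y = f x}"
      using refines that by blast
    then have "fiber_card \<Omega> g x \<le> fiber_card \<Omega> f x"
      unfolding fiber_card_def using fin by (intro card_mono) auto
    then show ?thesis using fiber_card_ge_1[OF fin that, of g] by simp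
  qed
  then have "(\<Sum>x\<in>\<Omega>. log 2 (fiber_card \<Omega> g x)) / card \<Omega>
           \<le> (\<Sum>x\<in>\<Omega>. log 2 (fiber_card \<Omega> f x)) / card \<Omega>"
    by (intro divide_right_mono sum_mono) auto
  then show ?thesis unfolding uniform_entropy_eq[OF fin] by linarith
qed

lemma uniform_entropy_inj:
  assumes "finite \<Omega>" "inj_on f \<Omega>"
  shows "uniform_entropy \<Omega> f = log 2 (card \<Omega>)"
proof -
  have "fiber_card \<Omega> f x = 1" if "x \<in> \<Omega>" for x
  proof -
    have "{y\<in>\<Omega>. f y = f x} = {x}" using assms(2) that unfolding inj_on_def by auto
    then show ?thesis unfolding fiber_card_def by simp
  qed
  then show ?thesis unfolding uniform_entropy_eq[OF assms(1)] by simp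
qed

lemma uniform_entropy_const: "finite \<Omega> \<Longrightarrow> uniform_entropy \<Omega> (\<lambda>x. c) = 0"
  unfolding uniform_entropy_def fiber_card_def by (cases "\<Omega> = {}") simp_all

lemma uniform_entropy_le_log_card_image:
  assumes fin: "finite \<Omega>" and ne: "\<Omega> \<noteq> {}"
  shows "uniform_entropy \<Omega> f \<le> log 2 (card (f ` \<Omega>))"
proof -
  define K where "K = real (card (f ` \<Omega>))"
  define N where "N x = real (fiber_card \<Omega> f x)" for x
  have card_pos: "card \<Omega> > 0" using fin ne by auto
  have K_pos: "K > 0" unfolding K_def using fin ne by (simp add: card_gt_0_iff)
  have N_ge: "N x \<ge> 1" if "x \<in> \<Omega>" for x using fiber_card_ge_1[OF fin that] unfolding N_def by simp
  have "(\<Sum>x\<in>\<Omega>. card \<Omega> / (K * N x)) = card \<Omega> / K * (\<Sum>x\<in>\<Omega>. 1 / N x)"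
    by (simp add: sum_distrib_left)
  also have "\<dots> = card \<Omega>"
    unfolding N_def sum_inverse_fiber_card[OF fin] using K_pos by (simp add: K_def)
  moreover have "0 < card \<Omega> / (K * N x)" if "x \<in> \<Omega>" for x
    using K_pos N_ge[OF that] card_pos by simp
  ultimately have "(\<Sum>x\<in>\<Omega>. log 2 (card \<Omega> / (K * N x))) \<le> 0"
    by (intro sum_log_le_zero fin) auto
  moreover have "log 2 (card \<Omega> / (K * N x)) = log 2 (card \<Omega> / N x) - log 2 K" if "x \<in> \<Omega>" for x
    using K_pos N_ge[OF that] card_pos by (simp add: log_divide log_mult)
  ultimately have "(\<Sum>x\<in>\<Omega>. log 2 (card \<Omega> / N x)) \<le> card \<Omega> * log 2 K"
    by (simp add: sum_subtractf)
  then show ?thesis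
    unfolding uniform_entropy_def N_def K_def using card_pos by (simp add: divide_le_eq mult.commute)
qed

lemma sum_joint_fiber_term_le:
  assumes fin: "finite \<Omega>" and "y \<in> \<Omega>"
  shows "(\<Sum>x\<in>\<Omega>. of_bool ((f y, k y) = (f x, k x)) * of_bool ((g z, k z) = (g x, k x))
            / (real (fiber_card \<Omega> (\<lambda>x. (f x, g x, k x)) x) * real (fiber_card \<Omega> k x)))
         \<le> of_bool (k z = k y) / real (fiber_card \<Omega> k y)"
proof (cases "k z = k y")
  case True
  let ?X = "{x\<in>\<Omega>. (f x, g x, k x) = (f y, g z, k y)}"
  let ?C = "\<lambda>x. real (fiber_card \<Omega> (\<lambda>x. (f x, g x, k x)) x)"
  have "(\<Sum>x\<in>\<Omega>. of_bool ((f y, k y) = (f x, k x)) * of_bool ((g z, k z) = (g x, k x))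
            / (?C x * real (fiber_card \<Omega> k x)))
      = (\<Sum>x\<in>\<Omega>. if (f x, g x, k x) = (f y, g z, k y) then 1 / ?C x else 0)
          / real (fiber_card \<Omega> k y)"
    unfolding sum_divide_distrib
  proof (intro sum.cong refl)
    fix x assume "x \<in> \<Omega>"
    show "of_bool ((f y, k y) = (f x, k x)) * of_bool ((g z, k z) = (g x, k x))
            / (?C x * real (fiber_card \<Omega> k x))
        = (if (f x, g x, k x) = (f y, g z, k y) then 1 / ?C x else 0) / real (fiber_card \<Omega> k y)"
      using True by (auto simp: fiber_card_def)
  qed
  also have "\<dots> = (\<Sum>x\<in>?X. 1 / ?C x) / real (fiber_card \<Omega> k y)"
    using fin by (simp add: sum.inter_filter)
  also have "\<dots> \<le> 1 / real (fiber_card \<Omega> k y)"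
  proof (intro divide_right_mono)
    show "(\<Sum>x\<in>?X. 1 / ?C x) \<le> 1"
    proof (cases "?X = {}")
      case True
      then show ?thesis by (subst True) simp
    next
      case False
      then obtain x0 where x0: "x0 \<in> ?X" by blast
      then have "?X = {x\<in>\<Omega>. (f x, g x, k x) = (f x0, g x0, k x0)}" by auto
      then show ?thesis
        using sum_fiber_inverse_fiber_card[OF fin, of x0 "\<lambda>x. (f x, g x, k x)"] x0 by simp
    qed
  qed simp
  finally show ?thesis using True by simp
qed (simp, intro sum_nonpos, auto)

text \<open>The combinatorial core of the submodularity of entropy.\<close>
lemma sum_fiber_card_ratio_le:
  assumes fin: "finite \<Omega>"
  shows "(\<Sum>x\<in>\<Omega>. real (fiber_card \<Omega> (\<lambda>x. (f x, k x)) x) * real (fiber_card \<Omega> (\<lambda>x. (g x, k x)) x)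
            / (real (fiber_card \<Omega> (\<lambda>x. (f x, g x, k x)) x) * real (fiber_card \<Omega> k x)))
         \<le> card \<Omega>"
  (is "(\<Sum>x\<in>\<Omega>. ?A x * ?B x / (?C x * ?D x)) \<le> _")
proof -
  have "(\<Sum>x\<in>\<Omega>. ?A x * ?B x / (?C x * ?D x))
      = (\<Sum>x\<in>\<Omega>. \<Sum>y\<in>\<Omega>. \<Sum>z\<in>\<Omega>.
           of_bool ((f y, k y) = (f x, k x)) * of_bool ((g z, k z) = (g x, k x)) / (?C x * ?D x))"
    unfolding real_fiber_card_eq_sum[OF fin, of "\<lambda>x. (f x, k x)"]
      real_fiber_card_eq_sum[OF fin, of "\<lambda>x. (g x, k x)"]
    by (simp add: sum_product sum_divide_distrib)
  also have "\<dots> = (\<Sum>y\<in>\<Omega>. \<Sum>z\<in>\<Omega>. \<Sum>x\<in>\<Omega>.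
           of_bool ((f y, k y) = (f x, k x)) * of_bool ((g z, k z) = (g x, k x)) / (?C x * ?D x))"
    by (subst sum.swap, rule sum.cong[OF refl], rule sum.swap)
  also have "\<dots> \<le> (\<Sum>y\<in>\<Omega>. \<Sum>z\<in>\<Omega>. of_bool (k z = k y) / ?D y)"
    by (rule sum_mono, rule sum_mono, erule sum_joint_fiber_term_le[OF fin])
  also have "\<dots> = (\<Sum>y\<in>\<Omega>. 1)"
  proof (intro sum.cong refl)
    fix y assume "y \<in> \<Omega>"
    then show "(\<Sum>z\<in>\<Omega>. of_bool (k z = k y) / ?D y) = 1"
      using fiber_card_ge_1[OF fin, of y k]
      by (simp add: sum_divide_distrib[symmetric] real_fiber_card_eq_sum[OF fin, of k y, symmetric])
  qed
  finally show ?thesis by simp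
qed

lemma uniform_entropy_submodular:
  assumes fin: "finite \<Omega>"
  shows "uniform_entropy \<Omega> (\<lambda>x. (f x, g x, k x)) + uniform_entropy \<Omega> k
       \<le> uniform_entropy \<Omega> (\<lambda>x. (f x, k x)) + uniform_entropy \<Omega> (\<lambda>x. (g x, k x))"
proof -
  define A where "A x = real (fiber_card \<Omega> (\<lambda>x. (f x, k x)) x)" for x
  define B where "B x = real (fiber_card \<Omega> (\<lambda>x. (g x, k x)) x)" for x
  define C where "C x = real (fiber_card \<Omega> (\<lambda>x. (f x, g x, k x)) x)" for x
  define D where "D x = real (fiber_card \<Omega> k x)" for x
  have pos: "A x \<ge> 1" "B x \<ge> 1" "C x \<ge> 1" "D x \<ge> 1" if "x \<in> \<Omega>" for x
    unfolding A_def B_def C_def D_def using fiber_card_ge_1[OF fin that] by auto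
  have "(\<Sum>x\<in>\<Omega>. A x * B x / (C x * D x)) \<le> card \<Omega>"
    unfolding A_def B_def C_def D_def by (rule sum_fiber_card_ratio_le[OF fin])
  moreover have "0 < A x * B x / (C x * D x)" if "x \<in> \<Omega>" for x
    using pos[OF that] by simp
  ultimately have "(\<Sum>x\<in>\<Omega>. log 2 (A x * B x / (C x * D x))) \<le> 0"
    by (intro sum_log_le_zero fin)
  also have "(\<Sum>x\<in>\<Omega>. log 2 (A x * B x / (C x * D x)))
      = (\<Sum>x\<in>\<Omega>. log 2 (A x) + log 2 (B x) - log 2 (C x) - log 2 (D x))"
  proof (intro sum.cong refl)
    fix x assume "x \<in> \<Omega>"
    from pos[OF this] show "log 2 (A x * B x / (C x * D x))
        = log 2 (A x) + log 2 (B x) - log 2 (C x) - log 2 (D x)"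
      by (simp add: log_mult log_divide)
  qed
  finally have "(\<Sum>x\<in>\<Omega>. log 2 (A x)) + (\<Sum>x\<in>\<Omega>. log 2 (B x))
              \<le> (\<Sum>x\<in>\<Omega>. log 2 (C x)) + (\<Sum>x\<in>\<Omega>. log 2 (D x))"
    by (simp only: sum.distrib sum_subtractf)
  then have "(\<Sum>x\<in>\<Omega>. log 2 (A x)) / card \<Omega> + (\<Sum>x\<in>\<Omega>. log 2 (B x)) / card \<Omega>
           \<le> (\<Sum>x\<in>\<Omega>. log 2 (C x)) / card \<Omega> + (\<Sum>x\<in>\<Omega>. log 2 (D x)) / card \<Omega>"
    unfolding add_divide_distrib[symmetric] by (rule divide_right_mono) simp
  then show ?thesis
    unfolding uniform_entropy_eq[OF fin] A_def B_def C_def D_def by linarith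
qed

lemma uniform_entropy_pair_le:
  assumes "finite \<Omega>"
  shows "uniform_entropy \<Omega> (\<lambda>x. (f x, g x)) \<le> uniform_entropy \<Omega> f + uniform_entropy \<Omega> g"
proof -
  have "uniform_entropy \<Omega> (\<lambda>x. (f x, g x, ())) + uniform_entropy \<Omega> (\<lambda>x. ())
      \<le> uniform_entropy \<Omega> (\<lambda>x. (f x, ())) + uniform_entropy \<Omega> (\<lambda>x. (g x, ()))"
    by (rule uniform_entropy_submodular[OF assms])
  moreover have "uniform_entropy \<Omega> (\<lambda>x. (f x, g x, ())) = uniform_entropy \<Omega> (\<lambda>x. (f x, g x))"
    and "uniform_entropy \<Omega> (\<lambda>x. (f x, ())) = uniform_entropy \<Omega> f"
    and "uniform_entropy \<Omega> (\<lambda>x. (g x, ())) = uniform_entropy \<Omega> g"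
    by (rule uniform_entropy_cong; simp)+
  ultimately show ?thesis using uniform_entropy_const[OF assms, of "()"] by linarith
qed

section \<open>Index codes and the entropy of decodable sets\<close>

lemma finite_messages: "finite (messages n t)"
  unfolding messages_def by (intro finite_PiE) auto

lemma messages_nonempty: "messages n t \<noteq> {}"
  unfolding messages_def by (simp add: PiE_eq_empty_iff)

lemma card_messages: "card (messages n t) = 2 ^ (t * n)"
  unfolding messages_def by (simp add: card_PiE power_mult)

lemma restrict_eq_restrict_iff: "restrict x A = restrict y A \<longleftrightarrow> (\<forall>i\<in>A. x i = y i)"
  by (auto simp: restrict_def fun_eq_iff)

locale ic_decoding =
  fixes n :: nat and G :: "nat \<Rightarrow> nat \<Rightarrow> bool" and t :: nat and P :: "nat set"
    and E :: "(nat \<Rightarrow> nat) \<Rightarrow> nat" and D :: "nat \<Rightarrow> nat \<Rightarrow> (nat \<Rightarrow> nat) \<Rightarrow> nat"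
  assumes finite_P: "finite P" and encode_in_P: "E ` messages n t \<subseteq> P"
    and decode: "\<And>i x. i < n \<Longrightarrow> x \<in> messages n t \<Longrightarrow> D i (E x) (restrict x {j. G i j}) = x i"
begin

definition code_ent :: real where
  "code_ent = uniform_entropy (messages n t) E"

definition joint_ent :: "nat set \<Rightarrow> real" where
  "joint_ent A = uniform_entropy (messages n t) (\<lambda>x. (E x, restrict x A))"

lemma code_ent_le_log_card: "code_ent \<le> log 2 (card P)"
proof -
  have "code_ent \<le> log 2 (card (E ` messages n t))"
    unfolding code_ent_def
    by (rule uniform_entropy_le_log_card_image[OF finite_messages messages_nonempty])
  also have "\<dots> \<le> log 2 (card P)"
  proof -
    have "card (E ` messages n t) > 0"
      using finite_messages messages_nonempty by (simp add: card_gt_0_iff)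
    then show ?thesis using card_mono[OF finite_P encode_in_P] by simp
  qed
  finally show ?thesis .
qed

lemma joint_ent_empty: "joint_ent {} = code_ent"
  unfolding joint_ent_def code_ent_def by (rule uniform_entropy_cong) auto

lemma joint_ent_all: "joint_ent {0..<n} = real t * real n"
proof -
  have "inj_on (\<lambda>x. (E x, restrict x {0..<n})) (messages n t)"
    by (rule inj_onI) (auto simp: messages_def PiE_restrict)
  then have "joint_ent {0..<n} = log 2 (card (messages n t))"
    unfolding joint_ent_def by (rule uniform_entropy_inj[OF finite_messages])
  also have "\<dots> = real t * real n" by (simp add: card_messages log_nat_power)
  finally show ?thesis .
qed

lemma joint_ent_le:
  assumes A: "A \<subseteq> {0..<n}"
  shows "joint_ent A \<le> code_ent + real t * real (card A)"
proof -
  have finite_A: "finite A" using A finite_subset by blast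
  let ?R = "PiE A (\<lambda>_. {0..<(2::nat)^t})"
  have "(\<lambda>x. restrict x A) ` messages n t \<subseteq> ?R"
    using A unfolding messages_def by (auto simp: PiE_def Pi_def)
  then have "card ((\<lambda>x. restrict x A) ` messages n t) \<le> card ?R"
    using finite_A by (intro card_mono) (auto intro: finite_PiE)
  moreover have "card ((\<lambda>x. restrict x A) ` messages n t) > 0"
    using finite_messages messages_nonempty by (simp add: card_gt_0_iff)
  ultimately have "log 2 (card ((\<lambda>x. restrict x A) ` messages n t)) \<le> log 2 (card ?R)"
    by simp
  also have "\<dots> = real t * real (card A)"
    using finite_A by (simp add: card_PiE log_nat_power power_mult[symmetric])
  finally have "uniform_entropy (messages n t) (\<lambda>x. restrict x A) \<le> real t * real (card A)"
    by (rule order_trans[OF uniform_entropy_le_log_card_image[OF finite_messages messages_nonempty]])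
  then show ?thesis
    using uniform_entropy_pair_le[OF finite_messages[of n t], where f = E and g = "\<lambda>x. restrict x A"]
    unfolding joint_ent_def code_ent_def by linarith
qed

lemma joint_ent_mono: "A \<subseteq> B \<Longrightarrow> joint_ent A \<le> joint_ent B"
  unfolding joint_ent_def
  by (intro uniform_entropy_mono[OF finite_messages]) (auto simp: restrict_eq_restrict_iff)

text \<open>Messages at vertices of \<open>B - A\<close> whose neighbourhoods lie in \<open>A\<close> can be decoded
  from the codeword and \<open>x\<^sub>A\<close>, so they carry no further information.\<close>
lemma joint_ent_eq_if_decodable:
  assumes "A \<subseteq> B"
    and decodable: "\<And>i. i \<in> B \<Longrightarrow> i \<notin> A \<Longrightarrow> i < n \<and> {j. G i j} \<subseteq> A"
  shows "joint_ent A = joint_ent B"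
  unfolding joint_ent_def
proof (rule uniform_entropy_cong)
  fix x y assume x: "x \<in> messages n t" and y: "y \<in> messages n t"
  have "x i = y i" if eq: "E x = E y" "restrict x A = restrict y A" and "i \<in> B" for i
  proof (cases "i \<in> A")
    case True
    then show ?thesis using eq by (simp add: restrict_eq_restrict_iff)
  next
    case False
    with decodable \<open>i \<in> B\<close> have "i < n" and "{j. G i j} \<subseteq> A" by auto
    then have "restrict x {j. G i j} = restrict y {j. G i j}"
      using eq by (auto simp: restrict_eq_restrict_iff)
    then show ?thesis using decode[OF \<open>i < n\<close> x] decode[OF \<open>i < n\<close> y] eq by metis
  qed
  then show "(E x, restrict x A) = (E y, restrict y A) \<longleftrightarrow> (E x, restrict x B) = (E y, restrict y B)"
    using \<open>A \<subseteq> B\<close> by (auto simp: restrict_eq_restrict_iff)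
qed

lemma joint_ent_submodular: "joint_ent (A \<union> B) + joint_ent (A \<inter> B) \<le> joint_ent A + joint_ent B"
proof -
  let ?f = "\<lambda>x. restrict x A" and ?g = "\<lambda>x. restrict x B"
    and ?k = "\<lambda>x. (E x, restrict x (A \<inter> B))"
  have "uniform_entropy (messages n t) (\<lambda>x. (?f x, ?g x, ?k x)) = joint_ent (A \<union> B)"
    and "uniform_entropy (messages n t) (\<lambda>x. (?f x, ?k x)) = joint_ent A"
    and "uniform_entropy (messages n t) (\<lambda>x. (?g x, ?k x)) = joint_ent B"
    unfolding joint_ent_def by (rule uniform_entropy_cong; auto simp: restrict_eq_restrict_iff)+
  then show ?thesis
    using uniform_entropy_submodular[OF finite_messages[of n t], where f = ?f and g = ?g and k = ?k]
    unfolding joint_ent_def by simp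
qed

lemma joint_ent_union_le: "joint_ent (A \<union> B) \<le> joint_ent A + joint_ent B - code_ent"
  using joint_ent_submodular[of A B] joint_ent_mono[of "{}" "A \<inter> B"] joint_ent_empty by simp

end

section \<open>Concave sequences and windows of cyclic progressions\<close>

lemma concave_seq_diff_antimono:
  fixes F :: "nat \<Rightarrow> real"
  assumes concave: "\<And>k. 1 \<le> k \<Longrightarrow> k < N \<Longrightarrow> F (k + 1) + F (k - 1) \<le> 2 * F k"
    and "1 \<le> a" "a \<le> k" "k \<le> N"
  shows "F k - F (k - 1) \<le> F a - F (a - 1)"
  using assms(3,4)
proof (induction k rule: dec_induct)
  case (step k)
  then show ?case using concave[of k] \<open>1 \<le> a\<close> by simp
qed simp

lemma concave_seq_growth_le:
  fixes F :: "nat \<Rightarrow> real"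
  assumes concave: "\<And>k. 1 \<le> k \<Longrightarrow> k < N \<Longrightarrow> F (k + 1) + F (k - 1) \<le> 2 * F k"
    and "1 \<le> a" "a \<le> b" "b \<le> N"
  shows "F b - F a \<le> real (b - a) * (F a - F (a - 1))"
  using assms(3,4)
proof (induction b rule: dec_induct)
  case (step b)
  have "F (b + 1) - F b \<le> F a - F (a - 1)"
    using concave_seq_diff_antimono[OF concave \<open>1 \<le> a\<close>, where k = "b + 1"] step by simp
  moreover have "real (Suc b - a) = real (b - a) + 1" using step by simp
  ultimately show ?case using step by (simp add: algebra_simps)
qed simp

lemma concave_seq_growth_ge:
  fixes F :: "nat \<Rightarrow> real"
  assumes concave: "\<And>k. 1 \<le> k \<Longrightarrow> k < N \<Longrightarrow> F (k + 1) + F (k - 1) \<le> 2 * F k"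
    and "1 \<le> a" "a \<le> b" "b < N"
  shows "real (b - a) * (F (b + 1) - F b) \<le> F b - F a"
  using assms(3,4)
proof (induction a rule: inc_induct)
  case (step a)
  have "F (b + 1) - F b \<le> F (a + 1) - F a"
    using concave_seq_diff_antimono[OF concave, where a = "a + 1" and k = "b + 1"] step by simp
  moreover have "real (b - a) = real (b - Suc a) + 1" using step by simp
  ultimately show ?case using step by (simp add: algebra_simps)
qed simp

definition cyclic_window :: "nat \<Rightarrow> nat \<Rightarrow> nat \<Rightarrow> nat \<Rightarrow> nat set" where
  "cyclic_window n s r k = (\<lambda>j. (r + s * j) mod n) ` {..<k}"

lemma mem_cyclic_window: "i \<in> cyclic_window n s r k \<longleftrightarrow> (\<exists>j<k. i = (r + s * j) mod n)"
  unfolding cyclic_window_def by auto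

lemma inj_on_cyclic_progression:
  fixes n s r K :: nat
  assumes "coprime n s" "K \<le> n"
  shows "inj_on (\<lambda>j. (r + s * j) mod n) {..<K}"
proof -
  have "a = b" if "a \<le> b" "b < n" and eq: "(r + s * a) mod n = (r + s * b) mod n" for a b
  proof -
    have "n dvd (r + s * b) - (r + s * a)"
      using mod_eq_dvd_iff_nat[of "r + s * a" "r + s * b" n] eq \<open>a \<le> b\<close> by simp
    also have "(r + s * b) - (r + s * a) = s * (b - a)" by (simp add: diff_mult_distrib2)
    finally have "n dvd b - a" using \<open>coprime n s\<close> by (simp add: coprime_dvd_mult_right_iff)
    then show "a = b" using that dvd_imp_le[of n "b - a"] by (cases "b - a = 0") auto
  qed
  then show ?thesis using \<open>K \<le> n\<close> by (intro inj_onI) (metis lessThan_iff linorder_le_cases order_less_le_trans)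
qed

lemma cyclic_window_subset: "0 < n \<Longrightarrow> cyclic_window n s r k \<subseteq> {0..<n}"
  unfolding cyclic_window_def by auto

lemma card_cyclic_window_le: "card (cyclic_window n s r k) \<le> k"
  unfolding cyclic_window_def using card_image_le[of "{..<k}"] by simp

lemma cyclic_window_full:
  assumes "0 < n" "coprime n s"
  shows "cyclic_window n s r n = {0..<n}"
proof -
  have "card (cyclic_window n s r n) = n"
    unfolding cyclic_window_def using inj_on_cyclic_progression[OF assms(2) order.refl]
    by (simp add: card_image)
  then show ?thesis using cyclic_window_subset[OF assms(1)] by (intro card_subset_eq) auto
qed

lemma ex_cyclic_progression_index:
  fixes n s r i :: nat
  assumes "coprime n s" "i < n"
  shows "\<exists>d<n. i = (r + s * d) mod n"
  using cyclic_window_full[of n s r] assms by (auto simp: cyclic_window_def)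

lemma cyclic_window_mod: "cyclic_window n s (r mod n) k = cyclic_window n s r k"
  unfolding cyclic_window_def by (simp add: mod_add_left_eq)

lemma cyclic_window_shift: "cyclic_window n s (r + s) k = (\<lambda>j. (r + s * j) mod n) ` {1..<k+1}"
proof -
  have "{1..<k+1} = Suc ` {..<k}" by (simp add: lessThan_atLeast0 image_Suc_atLeastLessThan)
  then show ?thesis unfolding cyclic_window_def by (simp add: image_image algebra_simps)
qed

lemma cyclic_window_Un_shift:
  "1 \<le> k \<Longrightarrow> cyclic_window n s r k \<union> cyclic_window n s (r + s) k = cyclic_window n s r (k + 1)"
  unfolding cyclic_window_shift unfolding cyclic_window_def image_Un[symmetric]
  by (intro arg_cong[where f="image _"]) auto

lemma cyclic_window_Int_shift:
  assumes "coprime n s" "k + 1 \<le> n"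
  shows "cyclic_window n s r k \<inter> cyclic_window n s (r + s) k = cyclic_window n s (r + s) (k - 1)"
proof -
  let ?f = "\<lambda>j. (r + s * j) mod n"
  have "cyclic_window n s r k \<inter> cyclic_window n s (r + s) k = ?f ` ({..<k} \<inter> {1..<k+1})"
    unfolding cyclic_window_shift unfolding cyclic_window_def
    using inj_on_cyclic_progression[OF assms, of r] by (intro inj_on_image_Int[symmetric]) auto
  also have "{..<k} \<inter> {1..<k+1} = {1..<k-1+1}" by auto
  finally show ?thesis unfolding cyclic_window_shift .
qed

lemma cyclic_window_split:
  "cyclic_window n s r (a + 1 + b)
     = cyclic_window n s r a \<union> insert ((r + s * a) mod n) (cyclic_window n s (r + s * (a + 1)) b)"
proof -
  have "{..<a + 1 + b} = {..<a} \<union> insert a ((\<lambda>j. a + 1 + j) ` {..<b})"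
  proof (intro set_eqI iffI)
    fix x assume "x \<in> {..<a + 1 + b}"
    then show "x \<in> {..<a} \<union> insert a ((\<lambda>j. a + 1 + j) ` {..<b})"
      by (cases x a rule: linorder_cases) (auto intro: image_eqI[of _ _ "x - a - 1"])
  qed auto
  then show ?thesis unfolding cyclic_window_def
    by (simp only: image_Un image_insert image_image) (simp add: algebra_simps)
qed

lemma sum_rotate_mod:
  fixes \<phi> :: "nat \<Rightarrow> real"
  assumes "0 < n"
  shows "(\<Sum>r<n. \<phi> ((r + c) mod n)) = (\<Sum>r<n. \<phi> r)"
proof -
  have "bij_betw (\<lambda>r. (c + 1 * r) mod n) {..<n} {..<n}"
    using inj_on_cyclic_progression[of n 1 n c] cyclic_window_full[OF assms, of 1 c]
    unfolding bij_betw_def cyclic_window_def by (auto simp: lessThan_atLeast0)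
  then show ?thesis using sum.reindex_bij_betw[of _ "{..<n}" "{..<n}" \<phi>] by (simp add: add.commute)
qed

context ic_decoding
begin

definition window_sum :: "nat \<Rightarrow> nat \<Rightarrow> real" where
  "window_sum s k = (\<Sum>r<n. joint_ent (cyclic_window n s r k))"

lemma window_sum_rotate: "0 < n \<Longrightarrow> (\<Sum>r<n. joint_ent (cyclic_window n s (r + c) k)) = window_sum s k"
  unfolding window_sum_def
  using sum_rotate_mod[of n "\<lambda>r. joint_ent (cyclic_window n s r k)" c] by (simp add: cyclic_window_mod)

lemma window_sum_le: "0 < n \<Longrightarrow> window_sum s k \<le> real n * (code_ent + real t * real k)"
proof -
  assume "0 < n"
  have "joint_ent (cyclic_window n s r k) \<le> code_ent + real t * real k" for r
  proof -
    have "real t * real (card (cyclic_window n s r k)) \<le> real t * real k"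
      using card_cyclic_window_le[of n s r k] by (intro mult_left_mono) auto
    then show ?thesis using joint_ent_le[OF cyclic_window_subset[OF \<open>0 < n\<close>, of s r k]] by linarith
  qed
  then have "window_sum s k \<le> (\<Sum>r<n. code_ent + real t * real k)"
    unfolding window_sum_def by (intro sum_mono)
  then show ?thesis by simp
qed

text \<open>Submodularity applied to the two overlapping windows of length \<open>k\<close> inside each window
  of length \<open>k + 1\<close>.\<close>
lemma window_sum_concave:
  assumes "0 < n" "coprime n s" "1 \<le> k" "k < n"
  shows "window_sum s (k + 1) + window_sum s (k - 1) \<le> 2 * window_sum s k"
proof -
  have "joint_ent (cyclic_window n s r (k + 1)) + joint_ent (cyclic_window n s (r + s) (k - 1))
      \<le> joint_ent (cyclic_window n s r k) + joint_ent (cyclic_window n s (r + s) k)" for r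
    using joint_ent_submodular[of "cyclic_window n s r k" "cyclic_window n s (r + s) k"] assms
    by (simp add: cyclic_window_Un_shift cyclic_window_Int_shift)
  then have "(\<Sum>r<n. joint_ent (cyclic_window n s r (k + 1)) + joint_ent (cyclic_window n s (r + s) (k - 1)))
      \<le> (\<Sum>r<n. joint_ent (cyclic_window n s r k) + joint_ent (cyclic_window n s (r + s) k))"
    by (intro sum_mono)
  then show ?thesis unfolding sum.distrib window_sum_rotate[OF \<open>0 < n\<close>] by (simp add: window_sum_def)
qed

end

section \<open>Cycles and their complements\<close>

lemma dvd_imp_eq_0_if_abs_less: "int n dvd k \<Longrightarrow> \<bar>k\<bar> < int n \<Longrightarrow> k = 0"
  using dvd_imp_le_int[of k "int n"] by fastforce

lemma cycle_graph_cases: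
  assumes "cycle_graph n i j"
  shows "i < n \<and> j < n \<and> (j = i + 1 \<or> i = j + 1 \<or> (i = n - 1 \<and> j = 0) \<or> (j = n - 1 \<and> i = 0))"
  using assms unfolding cycle_graph_def by (auto simp: mod_if split: if_splits)

lemma cycle_graph_imp_dvd:
  assumes "cycle_graph n i j"
  shows "int n dvd int j - int i - 1 \<or> int n dvd int j - int i + 1"
  using cycle_graph_cases[OF assms] by (auto simp: of_nat_diff)

lemma cycle_graph_succ: "i < n \<Longrightarrow> 3 \<le> n \<Longrightarrow> cycle_graph n i ((i + 1) mod n)"
  unfolding cycle_graph_def by (cases "i + 1 < n") (auto simp: mod_if)

lemma cycle_graph_pred: "i < n \<Longrightarrow> 3 \<le> n \<Longrightarrow> cycle_graph n i ((i + n - 1) mod n)"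
  unfolding cycle_graph_def by (cases "i = 0") (auto simp: mod_if)

lemma cycle_graph_neighbours:
  "i < n \<Longrightarrow> {j. cycle_graph n i j} \<subseteq> {(i + 1) mod n, (i + n - 1) mod n}"
  by (auto dest!: cycle_graph_cases)

lemma cycle_graph_neighbours_offset:
  assumes "1 \<le> d"
  shows "{j. cycle_graph n ((r + d) mod n) j} \<subseteq> {(r + (d + 1)) mod n, (r + (d - 1)) mod n}"
proof (cases "n = 0")
  case False
  have "((r + d) mod n + 1) mod n = (r + (d + 1)) mod n" by (metis mod_add_left_eq add.assoc)
  moreover have "((r + d) mod n + n - 1) mod n = (r + (d - 1)) mod n"
  proof -
    have "(r + d) mod n + n - 1 = (r + d) mod n + (n - 1)" using False by simp
    then have "((r + d) mod n + n - 1) mod n = (r + d + (n - 1)) mod n"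
      by (simp only: mod_add_left_eq)
    also have "r + d + (n - 1) = r + (d - 1) + n" using False assms by simp
    finally show ?thesis by simp
  qed
  ultimately show ?thesis using cycle_graph_neighbours[of "(r + d) mod n" n] False by simp
qed (simp add: cycle_graph_def)

lemma cycle_graph_same_half:
  assumes "i < n" "j < n" "j div 2 = i div 2" "j \<noteq> i"
  shows "cycle_graph n i j"
proof -
  have "j = i + 1 \<or> i = j + 1" using assms(3,4) by presburger
  then show ?thesis unfolding cycle_graph_def using assms by auto
qed

lemma compl_cycle_graph_neighbours:
  "i < n \<Longrightarrow> 3 \<le> n \<Longrightarrow>
    {j. compl_graph n (cycle_graph n) i j} \<subseteq> {0..<n} - {i, (i + 1) mod n, (i + n - 1) mod n}"
  using cycle_graph_succ[of i n] cycle_graph_pred[of i n] unfolding compl_graph_def by auto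

lemma compl_cycle_graph_progression:
  assumes n: "n = 2 * m + 1" and "l < m" "l' < m" "l \<noteq> l'"
  shows "compl_graph n (cycle_graph n) ((c + 2 * l) mod n) ((c + 2 * l') mod n)"
proof -
  define i j e where "i = (c + 2 * l) mod n" and "j = (c + 2 * l') mod n"
    and "e = 2 * (int l' - int l)"
  have "int n dvd (int c + 2 * int l') - int j" "int n dvd (int c + 2 * int l) - int i"
    unfolding i_def j_def by (simp_all add: of_nat_mod)
  then have "int n dvd ((int c + 2 * int l') - int j) - ((int c + 2 * int l) - int i)"
    by (rule dvd_diff)
  also have "((int c + 2 * int l') - int j) - ((int c + 2 * int l) - int i) = e - (int j - int i)"
    unfolding e_def by simp
  finally have dvd_e: "int n dvd e - (int j - int i)" .
  have e_bounds: "\<bar>e\<bar> + 1 < int n" "e \<noteq> 0" "even e"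
    unfolding e_def using assms by auto
  have "j \<noteq> i"
  proof
    assume "j = i"
    then show False using dvd_imp_eq_0_if_abs_less[of n e] dvd_e e_bounds by simp
  qed
  moreover have "\<not> cycle_graph n i j"
  proof
    assume "cycle_graph n i j"
    then consider "int n dvd int j - int i - 1" | "int n dvd int j - int i + 1"
      using cycle_graph_imp_dvd by blast
    then have "int n dvd e - 1 \<or> int n dvd e + 1"
    proof cases
      case 1
      then have "int n dvd (e - (int j - int i)) + (int j - int i - 1)" by (rule dvd_add[OF dvd_e])
      then show ?thesis by simp
    next
      case 2
      then have "int n dvd (e - (int j - int i)) + (int j - int i + 1)" by (rule dvd_add[OF dvd_e])
      then show ?thesis by simp
    qed
    moreover have "\<bar>e - 1\<bar> < int n" "\<bar>e + 1\<bar> < int n" using e_bounds(1) by arith+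
    ultimately have "e - 1 = 0 \<or> e + 1 = 0" using dvd_imp_eq_0_if_abs_less by blast
    then show False using \<open>even e\<close> by presburger
  qed
  ultimately show ?thesis
    unfolding compl_graph_def i_def j_def using n by simp
qed

lemma cycle_graph_neighbours_odd_cover:
  assumes n: "n = 2 * m + 1" "2 \<le> m" and "i < n"
    and not_in: "i \<notin> cyclic_window n 1 r 2 \<union> cyclic_window n 2 (r + 3) (m - 1)"
  shows "{j. cycle_graph n i j} \<subseteq> cyclic_window n 1 r 2 \<union> cyclic_window n 2 (r + 3) (m - 1)"
    (is "_ \<subseteq> ?W \<union> ?Q")
proof -
  have covered: "(r + x) mod n \<in> ?W \<union> ?Q" if x: "odd x" "x \<le> n" for x
  proof -
    have "x = 1 \<or> x = n \<or> 3 \<le> x \<and> x < 2 * m" using x n by presburger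
    then consider "x = 1" | "x = n" | "3 \<le> x" "x < 2 * m" by blast
    then show ?thesis
    proof cases
      case 1
      then have "(r + x) mod n \<in> ?W" unfolding mem_cyclic_window by (intro exI[of _ 1]) simp
      then show ?thesis by blast
    next
      case 2
      then have "(r + x) mod n \<in> ?W" unfolding mem_cyclic_window by (intro exI[of _ 0]) simp
      then show ?thesis by blast
    next
      case 3
      moreover define j where "j = (x - 3) div 2"
      ultimately have "x = 3 + 2 * j" "j < m - 1" using \<open>odd x\<close> by presburger+
      then have "(r + x) mod n \<in> ?Q" unfolding mem_cyclic_window
        by (intro exI[of _ j]) (simp add: add.assoc)
      then show ?thesis by blast
    qed
  qed
  obtain d where d: "d < n" "i = (r + 1 * d) mod n"
    using ex_cyclic_progression_index[of n 1 i r] \<open>i < n\<close> by auto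
  have "even d" using covered[of d] d not_in by auto
  moreover have "(r + 0) mod n \<in> ?W" unfolding mem_cyclic_window by (intro exI[of _ 0]) simp
  then have "d \<noteq> 0" using d(2) not_in by (cases "d = 0") auto
  ultimately have "odd (d + 1)" "d + 1 \<le> n" "odd (d - 1)" "d - 1 \<le> n" "1 \<le> d"
    using d n by auto
  then have "(r + (d + 1)) mod n \<in> ?W \<union> ?Q" "(r + (d - 1)) mod n \<in> ?W \<union> ?Q"
    using covered by blast+
  moreover have "{j. cycle_graph n i j} \<subseteq> {(r + (d + 1)) mod n, (r + (d - 1)) mod n}"
    using cycle_graph_neighbours_offset[of d n r] \<open>1 \<le> d\<close> d(2) by simp
  ultimately show ?thesis by blast
qed

lemma compl_cycle_graph_neighbours_mid:
  assumes n: "n = 2 * m + 1" "2 \<le> m"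
  shows "{j. compl_graph n (cycle_graph n) ((r + 2 * (m - 1)) mod n) j}
           \<subseteq> cyclic_window n 2 r (n - 2) - {(r + 2 * (m - 1)) mod n}"
proof
  let ?a = "(r + 2 * (m - 1)) mod n"
  have "3 \<le> n" "odd n" using n by auto
  have succ: "(?a + 1) mod n = (r + 2 * (n - 1)) mod n"
  proof -
    have "(?a + 1) mod n = (r + 2 * (m - 1) + 1) mod n" by (rule mod_add_left_eq)
    also have "\<dots> = (r + 2 * (m - 1) + 1 + n) mod n" by (rule mod_add_self2[symmetric])
    also have "r + 2 * (m - 1) + 1 + n = r + 2 * (n - 1)" using n by simp
    finally show ?thesis .
  qed
  have pred: "(?a + n - 1) mod n = (r + 2 * (n - 2)) mod n"
  proof -
    have "?a + n - 1 = ?a + (n - 1)" using n by simp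
    then have "(?a + n - 1) mod n = (r + 2 * (m - 1) + (n - 1)) mod n"
      by (simp only: mod_add_left_eq)
    also have "r + 2 * (m - 1) + (n - 1) = r + 2 * (n - 2)" using n by simp
    finally show ?thesis .
  qed
  fix j assume "j \<in> {j. compl_graph n (cycle_graph n) ?a j}"
  then have j: "j \<in> {0..<n} - {?a, (?a + 1) mod n, (?a + n - 1) mod n}"
    using compl_cycle_graph_neighbours[of ?a n] \<open>3 \<le> n\<close> by auto
  obtain d where d: "d < n" "j = (r + 2 * d) mod n"
    using ex_cyclic_progression_index[of n 2 j r] \<open>odd n\<close> j by auto
  have "d \<noteq> n - 1" "d \<noteq> n - 2" using j d succ pred by auto
  then have "d < n - 2" using d by linarith
  then have "j \<in> cyclic_window n 2 r (n - 2)"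
    unfolding mem_cyclic_window using d by auto
  then show "j \<in> cyclic_window n 2 r (n - 2) - {?a}" using j by auto
qed

section \<open>Entropy lower bounds\<close>

context ic_decoding
begin

lemma joint_ent_cycle_window_all:
  assumes "G = cycle_graph n" "3 \<le> n"
  shows "joint_ent (cyclic_window n 1 r (n - 1)) = joint_ent {0..<n}"
proof (rule joint_ent_eq_if_decodable)
  show "cyclic_window n 1 r (n - 1) \<subseteq> {0..<n}" using cyclic_window_subset assms by simp
  fix i assume i: "i \<in> {0..<n}" "i \<notin> cyclic_window n 1 r (n - 1)"
  then obtain d where d: "d < n" "i = (r + 1 * d) mod n"
    using ex_cyclic_progression_index[of n 1 i r] by auto
  moreover from d i have "\<not> d < n - 1" unfolding mem_cyclic_window by blast
  ultimately have "d = n - 1" by simp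
  have "(r + (d + 1)) mod n \<in> cyclic_window n 1 r (n - 1)"
    unfolding mem_cyclic_window using \<open>d = n - 1\<close> assms by (intro exI[of _ 0]) simp
  moreover have "(r + (d - 1)) mod n \<in> cyclic_window n 1 r (n - 1)"
    unfolding mem_cyclic_window using \<open>d = n - 1\<close> assms by (intro exI[of _ "n - 2"]) (auto simp: numeral_2_eq_2)
  moreover have "{j. G i j} \<subseteq> {(r + (d + 1)) mod n, (r + (d - 1)) mod n}"
    using cycle_graph_neighbours_offset[of d n r] \<open>d = n - 1\<close> assms d by simp
  ultimately show "i < n \<and> {j. G i j} \<subseteq> cyclic_window n 1 r (n - 1)"
    using i by auto
qed

lemma joint_ent_cycle_window3_le:
  assumes "G = cycle_graph n" "3 \<le> n"
  shows "joint_ent (cyclic_window n 1 r 3) \<le> code_ent + 2 * real t"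
proof -
  let ?A = "{(r + 0) mod n, (r + 2) mod n}"
  have "joint_ent ?A = joint_ent (cyclic_window n 1 r 3)"
  proof (rule joint_ent_eq_if_decodable)
    have "(r + 1 * 0) mod n \<in> cyclic_window n 1 r 3" "(r + 1 * 2) mod n \<in> cyclic_window n 1 r 3"
      unfolding cyclic_window_def by (intro imageI; simp)+
    then show "?A \<subseteq> cyclic_window n 1 r 3" by simp
    fix i assume "i \<in> cyclic_window n 1 r 3" "i \<notin> ?A"
    then have "i = (r + 1) mod n" unfolding mem_cyclic_window by (auto simp: less_Suc_eq numeral_3_eq_3)
    then show "i < n \<and> {j. G i j} \<subseteq> ?A"
      using cycle_graph_neighbours_offset[of 1 n r] assms by (auto simp: insert_commute)
  qed
  moreover have "joint_ent ?A \<le> code_ent + real t * real (card ?A)"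
    using assms by (intro joint_ent_le) auto
  moreover have "real t * real (card ?A) \<le> real t * 2"
    by (intro mult_left_mono) (auto simp: card_insert_le_m1)
  ultimately show ?thesis by linarith
qed

lemma joint_ent_all_le_odd_cycle:
  assumes "G = cycle_graph n" "n = 2 * m + 1" "2 \<le> m"
  shows "joint_ent {0..<n} \<le> joint_ent (cyclic_window n 1 r 2) + real t * (real m - 1)"
proof -
  let ?W = "cyclic_window n 1 r 2" and ?Q = "cyclic_window n 2 (r + 3) (m - 1)"
  have "0 < n" using assms by simp
  have "joint_ent (?W \<union> ?Q) = joint_ent {0..<n}"
    using cyclic_window_subset[OF \<open>0 < n\<close>] cycle_graph_neighbours_odd_cover[of n m]
    by (intro joint_ent_eq_if_decodable) (use assms in auto)
  moreover have "joint_ent (?W \<union> ?Q) \<le> joint_ent ?W + joint_ent ?Q - code_ent"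
    by (rule joint_ent_union_le)
  moreover have "joint_ent ?Q \<le> code_ent + real t * real (card ?Q)"
    by (intro joint_ent_le cyclic_window_subset \<open>0 < n\<close>)
  moreover have "real t * real (card ?Q) \<le> real t * (real m - 1)"
    using card_cyclic_window_le[of n 2 "r + 3" "m - 1"] assms by (intro mult_left_mono) auto
  ultimately show ?thesis by linarith
qed

lemma code_ent_ge_odd_cycle:
  assumes G: "G = cycle_graph n" and n: "n = 2 * m + 1" "2 \<le> m"
  shows "real t * real n / 2 \<le> code_ent"
proof -
  have "0 < n" "3 \<le> n" using n by auto
  have concave: "\<And>k. 1 \<le> k \<Longrightarrow> k < n \<Longrightarrow> window_sum 1 (k + 1) + window_sum 1 (k - 1) \<le> 2 * window_sum 1 k"
    using \<open>0 < n\<close> by (intro window_sum_concave) auto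
  have growth: "window_sum 1 (n - 1) - window_sum 1 3 \<le> real (n - 1 - 3) * (window_sum 1 3 - window_sum 1 (3 - 1))"
    by (rule concave_seq_growth_le[OF concave]) (use n in auto)
  have W_all: "window_sum 1 (n - 1) = real n * (real t * real n)"
    unfolding window_sum_def joint_ent_cycle_window_all[OF G \<open>3 \<le> n\<close>] joint_ent_all by simp
  have W3: "window_sum 1 3 \<le> real n * (code_ent + 2 * real t)"
    using sum_mono[of "{..<n}", OF joint_ent_cycle_window3_le[OF G \<open>3 \<le> n\<close>]]
    unfolding window_sum_def by simp
  have W2: "real n * (real t * real n) \<le> window_sum 1 2 + real n * (real t * (real m - 1))"
    using sum_mono[of "{..<n}", OF joint_ent_all_le_odd_cycle[OF G n]]
    unfolding window_sum_def joint_ent_all by (simp add: sum.distrib)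
  define N T M p where "N = real n" and "T = real t" and "M = real m" and "p = code_ent"
  have NM: "N = 2 * M + 1" and "M \<ge> 2" and "real (n - 1 - 3) = N - 4"
    using n unfolding N_def M_def by auto
  have "N * (T * N) - window_sum 1 3 \<le> (N - 4) * (window_sum 1 3 - window_sum 1 2)"
    using growth W_all \<open>real (n - 1 - 3) = N - 4\<close> unfolding N_def T_def by simp
  moreover have "(N - 3) * window_sum 1 3 \<le> (N - 3) * (N * (p + 2 * T))"
    using W3 NM \<open>M \<ge> 2\<close> unfolding N_def T_def p_def by (intro mult_left_mono) auto
  moreover have "(N - 4) * (N * (T * N) - N * (T * (M - 1))) \<le> (N - 4) * window_sum 1 2"
    using W2 NM \<open>M \<ge> 2\<close> unfolding N_def T_def M_def by (intro mult_left_mono) auto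
  ultimately have "N * (T * N) \<le> N * ((N - 3) * (p + 2 * T) - (N - 4) * (T * N - T * (M - 1)))"
    by (simp add: algebra_simps)
  then have "T * N \<le> (N - 3) * (p + 2 * T) - (N - 4) * (T * N - T * (M - 1))"
    using NM \<open>M \<ge> 2\<close> by (simp add: mult_le_cancel_left)
  then have "(M - 1) * (T * N) \<le> (M - 1) * (2 * p)"
    unfolding NM by (simp add: algebra_simps)
  then have "T * N \<le> 2 * p" using \<open>M \<ge> 2\<close> by (simp add: mult_le_cancel_left)
  then show ?thesis unfolding T_def N_def p_def by simp
qed

lemma code_ent_ge_even_cycle:
  assumes G: "G = cycle_graph n" and n: "n = 2 * m" "2 \<le> m"
  shows "real t * real n / 2 \<le> code_ent"
proof -
  let ?O = "cyclic_window n 2 1 m"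
  have "0 < n" "3 \<le> n" using n by auto
  have in_O: "x \<in> ?O" if "odd x" "x < n" for x
    unfolding mem_cyclic_window using that n by (intro exI[of _ "x div 2"]) auto
  have "joint_ent ?O = joint_ent {0..<n}"
  proof (rule joint_ent_eq_if_decodable)
    show "?O \<subseteq> {0..<n}" by (rule cyclic_window_subset[OF \<open>0 < n\<close>])
    fix i assume i: "i \<in> {0..<n}" "i \<notin> ?O"
    then have "even i" using in_O by auto
    then have "odd ((i + 1) mod n)" "odd ((i + n - 1) mod n)"
      using i n by (auto simp: mod_if)
    then show "i < n \<and> {j. G i j} \<subseteq> ?O"
      using in_O cycle_graph_neighbours[of i n] i G \<open>0 < n\<close> by auto
  qed
  moreover have "joint_ent ?O \<le> code_ent + real t * real (card ?O)"
    by (intro joint_ent_le cyclic_window_subset \<open>0 < n\<close>)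
  moreover have "real t * real (card ?O) \<le> real t * real m"
    using card_cyclic_window_le[of n 2 1 m] by (intro mult_left_mono) auto
  ultimately show ?thesis using joint_ent_all n by simp
qed

lemma code_ent_ge_even_compl_cycle:
  assumes G: "G = compl_graph n (cycle_graph n)" and n: "n = 2 * m" "2 \<le> m"
  shows "2 * real t \<le> code_ent"
proof -
  let ?A = "{0..<n} - {0, 1}"
  have "3 \<le> n" using n by simp
  have "joint_ent ?A = joint_ent {0..<n}"
  proof (rule joint_ent_eq_if_decodable)
    fix i assume "i \<in> {0..<n}" "i \<notin> ?A"
    then have "i = 0 \<or> i = 1" by auto
    then show "i < n \<and> {j. G i j} \<subseteq> ?A"
      using compl_cycle_graph_neighbours[of 0 n] compl_cycle_graph_neighbours[of 1 n] \<open>3 \<le> n\<close>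
      unfolding G by auto
  qed auto
  moreover have "joint_ent ?A \<le> code_ent + real t * real (card ?A)"
    by (intro joint_ent_le) auto
  moreover have "card ?A = n - 2" using \<open>3 \<le> n\<close> by (simp add: card_Diff_subset)
  ultimately have "real t * real n \<le> code_ent + real t * (real n - 2)"
    using joint_ent_all \<open>3 \<le> n\<close> by (simp add: of_nat_diff)
  then show ?thesis by (simp add: algebra_simps)
qed

lemma joint_ent_compl_window_all:
  assumes G: "G = compl_graph n (cycle_graph n)" and "odd n"
  shows "joint_ent (cyclic_window n 2 r (n - 1)) = joint_ent {0..<n}"
proof (rule joint_ent_eq_if_decodable)
  have "0 < n" using \<open>odd n\<close> by (cases n) auto
  then show "cyclic_window n 2 r (n - 1) \<subseteq> {0..<n}" by (rule cyclic_window_subset)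
  fix i assume i: "i \<in> {0..<n}" "i \<notin> cyclic_window n 2 r (n - 1)"
  obtain d where d: "d < n" "i = (r + 2 * d) mod n"
    using ex_cyclic_progression_index[of n 2 i r] \<open>odd n\<close> i by auto
  moreover from i d have "\<not> d < n - 1" unfolding mem_cyclic_window by blast
  ultimately have "d = n - 1" by simp
  with d have i_eq: "i = (r + 2 * (n - 1)) mod n" by simp
  have "j \<in> cyclic_window n 2 r (n - 1)" if "G i j" for j
  proof -
    have "j < n" "j \<noteq> i" using that unfolding G compl_graph_def by auto
    then obtain d' where "d' < n" "j = (r + 2 * d') mod n"
      using ex_cyclic_progression_index[of n 2 j r] \<open>odd n\<close> by auto
    moreover have "d' \<noteq> n - 1" using i_eq \<open>j \<noteq> i\<close> \<open>j = (r + 2 * d') mod n\<close> by auto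
    ultimately show ?thesis unfolding mem_cyclic_window by (intro exI[of _ d']) auto
  qed
  then show "i < n \<and> {j. G i j} \<subseteq> cyclic_window n 2 r (n - 1)" using i by auto
qed

text \<open>The middle vertex of a window of length \<open>n - 2\<close> is decodable from the rest, which
  splits into two windows of length \<open>m - 1\<close>.\<close>
lemma joint_ent_compl_window_le:
  assumes G: "G = compl_graph n (cycle_graph n)" and n: "n = 2 * m + 1" "2 \<le> m"
  shows "joint_ent (cyclic_window n 2 r (n - 2))
       \<le> joint_ent (cyclic_window n 2 r (m - 1)) + joint_ent (cyclic_window n 2 (r + 2 * m) (m - 1)) - code_ent"
proof -
  let ?a = "(r + 2 * (m - 1)) mod n"
  have split: "cyclic_window n 2 r (n - 2)
      = cyclic_window n 2 r (m - 1) \<union> insert ?a (cyclic_window n 2 (r + 2 * m) (m - 1))"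
  proof -
    have "n - 2 = m - 1 + 1 + (m - 1)" "r + 2 * (m - 1 + 1) = r + 2 * m" using n by auto
    then show ?thesis using cyclic_window_split[of n 2 r "m - 1" "m - 1"] by (simp only:)
  qed
  have "joint_ent (cyclic_window n 2 r (n - 2) - {?a}) = joint_ent (cyclic_window n 2 r (n - 2))"
    using compl_cycle_graph_neighbours_mid[OF n, of r] n G
    by (intro joint_ent_eq_if_decodable) auto
  moreover have "cyclic_window n 2 r (n - 2) - {?a}
      \<subseteq> cyclic_window n 2 r (m - 1) \<union> cyclic_window n 2 (r + 2 * m) (m - 1)"
    unfolding split by blast
  then have "joint_ent (cyclic_window n 2 r (n - 2) - {?a})
      \<le> joint_ent (cyclic_window n 2 r (m - 1) \<union> cyclic_window n 2 (r + 2 * m) (m - 1))"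
    by (rule joint_ent_mono)
  ultimately show ?thesis
    using joint_ent_union_le[of "cyclic_window n 2 r (m - 1)" "cyclic_window n 2 (r + 2 * m) (m - 1)"]
    by linarith
qed

lemma window_sum_compl_long_le:
  assumes G: "G = compl_graph n (cycle_graph n)" and n: "n = 2 * m + 1" "2 \<le> m"
  shows "window_sum 2 (n - 2) \<le> 2 * window_sum 2 (m - 1) - real n * code_ent"
proof -
  have "0 < n" using n by simp
  have "window_sum 2 (n - 2) \<le> (\<Sum>r<n. joint_ent (cyclic_window n 2 r (m - 1))
      + joint_ent (cyclic_window n 2 (r + 2 * m) (m - 1)) - code_ent)"
    unfolding window_sum_def by (intro sum_mono joint_ent_compl_window_le[OF G n])
  also have "\<dots> = 2 * window_sum 2 (m - 1) - real n * code_ent"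
    using window_sum_rotate[OF \<open>0 < n\<close>, of 2 "2 * m" "m - 1"]
    by (simp add: sum.distrib sum_subtractf window_sum_def)
  finally show ?thesis .
qed

lemma code_ent_ge_odd_compl_cycle:
  assumes G: "G = compl_graph n (cycle_graph n)" and n: "n = 2 * m + 1" "2 \<le> m"
  shows "real t * real n / real m \<le> code_ent"
proof -
  have "0 < n" "odd n" using n by auto
  have concave: "\<And>k. 1 \<le> k \<Longrightarrow> k < n \<Longrightarrow> window_sum 2 (k + 1) + window_sum 2 (k - 1) \<le> 2 * window_sum 2 k"
    using \<open>0 < n\<close> \<open>odd n\<close> by (intro window_sum_concave) auto
  have growth: "real (n - 2 - (m - 1)) * (window_sum 2 (n - 2 + 1) - window_sum 2 (n - 2))
      \<le> window_sum 2 (n - 2) - window_sum 2 (m - 1)"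
    by (rule concave_seq_growth_ge[OF concave]) (use n in auto)
  have "n - 2 + 1 = n - 1" using n by simp
  have W_all: "window_sum 2 (n - 2 + 1) = real n * (real t * real n)"
    unfolding \<open>n - 2 + 1 = n - 1\<close> window_sum_def joint_ent_compl_window_all[OF G \<open>odd n\<close>]
      joint_ent_all by simp
  have W_long: "window_sum 2 (n - 2) \<le> 2 * window_sum 2 (m - 1) - real n * code_ent"
    by (rule window_sum_compl_long_le[OF G n])
  have W_short: "window_sum 2 (m - 1) \<le> real n * (code_ent + real t * (real m - 1))"
    using window_sum_le[OF \<open>0 < n\<close>, of 2 "m - 1"] n by (simp add: of_nat_diff)
  define N T M X Y p where "N = real n" and "T = real t" and "M = real m"
    and "X = window_sum 2 (m - 1)" and "Y = window_sum 2 (n - 2)" and "p = code_ent"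
  have NM: "N = 2 * M + 1" and "M \<ge> 2" and "real (n - 2 - (m - 1)) = M"
    using n unfolding N_def M_def by auto
  have "M * (N * (T * N)) \<le> M * Y + Y - X"
    using growth W_all \<open>real (n - 2 - (m - 1)) = M\<close>
    unfolding X_def Y_def N_def T_def by (simp add: algebra_simps)
  moreover have "(M + 1) * Y \<le> (M + 1) * (2 * X - N * p)"
    using W_long \<open>M \<ge> 2\<close> unfolding X_def Y_def N_def p_def by (intro mult_left_mono) auto
  moreover have "(2 * M + 1) * X \<le> (2 * M + 1) * (N * (p + T * (M - 1)))"
    using W_short \<open>M \<ge> 2\<close> unfolding X_def N_def T_def M_def p_def by (intro mult_left_mono) auto
  ultimately have "N * (M * (T * N)) \<le> N * (M * p + N * (T * (M - 1)))"
    unfolding NM by (simp add: algebra_simps)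
  then have "M * (T * N) \<le> M * p + N * (T * (M - 1))"
    using NM \<open>M \<ge> 2\<close> by (simp add: mult_le_cancel_left)
  then have "T * N \<le> M * p" by (simp add: algebra_simps)
  then show ?thesis
    using \<open>M \<ge> 2\<close> unfolding T_def N_def M_def p_def by (simp add: divide_le_eq mult.commute)
qed

end

text \<open>Linear codes over GF(2): message \<open>x i < 2 ^ t\<close> is read as the bits \<open>(i, l)\<close>, \<open>l < t\<close>,
  and bit \<open>c\<close> of the codeword is the parity of the message bits in \<open>S c\<close>.\<close>
definition parity :: "(nat \<times> nat) set \<Rightarrow> (nat \<Rightarrow> nat) \<Rightarrow> bool" where
  "parity S x = odd (\<Sum>q\<in>S. of_bool (bit (x (fst q)) (snd q)) :: nat)"

definition parity_encode :: "nat \<Rightarrow> (nat \<Rightarrow> (nat \<times> nat) set) \<Rightarrow> (nat \<Rightarrow> nat) \<Rightarrow> nat" where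
  "parity_encode K S x = horner_sum of_bool 2 (map (\<lambda>c. parity (S c) x) [0..<K])"

text \<open>Receiver \<open>i\<close> reads bit \<open>l\<close> of its message off codeword bit \<open>ch i l\<close>.\<close>
definition parity_decode ::
  "nat \<Rightarrow> (nat \<Rightarrow> (nat \<times> nat) set) \<Rightarrow> (nat \<Rightarrow> nat \<Rightarrow> nat) \<Rightarrow> nat \<Rightarrow> nat \<Rightarrow> (nat \<Rightarrow> nat) \<Rightarrow> nat"
where
  "parity_decode t S ch i w s = horner_sum of_bool 2
     (map (\<lambda>l. bit w (ch i l) \<noteq> parity (S (ch i l) - {(i, l)}) s) [0..<t])"

lemma bit_parity_encode: "c < K \<Longrightarrow> bit (parity_encode K S x) c = parity (S c) x"
  unfolding parity_encode_def by (simp add: bit_horner_sum_bit_iff)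

lemma parity_encode_less: "parity_encode K S x < 2 ^ K"
  unfolding parity_encode_def using horner_sum_of_bool_2_less[of "map (\<lambda>c. parity (S c) x) [0..<K]"]
  by simp

lemma parity_code_is_ic_solution:
  assumes finite_S: "\<And>c. finite (S c)"
    and ch: "\<And>i l. i < n \<Longrightarrow> l < t \<Longrightarrow> ch i l < K \<and> (i, l) \<in> S (ch i l) \<and>
                 (\<forall>q\<in>S (ch i l). q \<noteq> (i, l) \<longrightarrow> G i (fst q))"
  shows "is_ic_solution n G t {0..<2^K} (parity_encode K S)"
  unfolding is_ic_solution_def
proof (intro conjI exI[of _ "parity_decode t S ch"] allI impI ballI)
  show "parity_encode K S ` messages n t \<subseteq> {0..<2 ^ K}" using parity_encode_less by auto
  fix i x assume i: "i < n" and x: "x \<in> messages n t"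
  let ?s = "restrict x {j. G i j}" and ?b = "\<lambda>y q. of_bool (bit (y (fst q)) (snd q)) :: nat"
  have "(bit (parity_encode K S x) (ch i l) \<noteq> parity (S (ch i l) - {(i, l)}) ?s) = bit (x i) l"
    if "l < t" for l
  proof -
    from ch[OF i that] have "ch i l < K" "(i, l) \<in> S (ch i l)"
      and others: "\<forall>q\<in>S (ch i l). q \<noteq> (i, l) \<longrightarrow> G i (fst q)" by auto
    have "(\<Sum>q\<in>S (ch i l). ?b x q) = ?b x (i, l) + (\<Sum>q\<in>S (ch i l) - {(i, l)}. ?b x q)"
      using finite_S \<open>(i, l) \<in> S (ch i l)\<close> by (rule sum.remove)
    moreover have "(\<Sum>q\<in>S (ch i l) - {(i, l)}. ?b ?s q) = (\<Sum>q\<in>S (ch i l) - {(i, l)}. ?b x q)"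
      using others by (intro sum.cong) auto
    ultimately show ?thesis
      unfolding bit_parity_encode[OF \<open>ch i l < K\<close>] parity_def by auto
  qed
  then have "parity_decode t S ch i (parity_encode K S x) ?s = horner_sum of_bool 2 (map (bit (x i)) [0..<t])"
    unfolding parity_decode_def by (intro arg_cong[where f="horner_sum of_bool 2"] map_cong) auto
  also have "\<dots> = take_bit t (x i)" by (rule horner_sum_bit_eq_take_bit)
  also have "\<dots> = x i" using x i unfolding messages_def by (auto simp: take_bit_nat_eq_self_iff)
  finally show "parity_decode t S ch i (parity_encode K S x) ?s = x i" .
qed simp

lemma beta_t_le:
  assumes "is_ic_solution n G t {0..<2^K} E"
  shows "beta_t n G t \<le> K"
proof -
  have "nat \<lceil>log 2 (real (card {0..<(2::nat)^K}))\<rceil> = K" by (simp add: log_nat_power)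
  then show ?thesis unfolding beta_t_def using assms by (metis (mono_tags, lifting) Least_le)
qed

lemma is_ic_solution_uncoded:
  assumes "0 < t"
  shows "is_ic_solution n G t {0..<2^(n * t)} (parity_encode (n * t) (\<lambda>c. {(c div t, c mod t)}))"
proof (rule parity_code_is_ic_solution[where ch = "\<lambda>i l. i * t + l"])
  fix i l assume "i < n" "l < t"
  have "i * t + l < (i + 1) * t" using \<open>l < t\<close> by simp
  also have "\<dots> \<le> n * t" using \<open>i < n\<close> by (intro mult_right_mono) auto
  finally show "i * t + l < n * t \<and> (i, l) \<in> {((i * t + l) div t, (i * t + l) mod t)} \<and>
      (\<forall>q\<in>{((i * t + l) div t, (i * t + l) mod t)}. q \<noteq> (i, l) \<longrightarrow> G i (fst q))"
    using \<open>l < t\<close> by simp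
qed simp

lemma cycle_graph_pair_code:
  assumes "3 \<le> n"
  shows "is_ic_solution n (cycle_graph n) 1 {0..<2^((n + 1) div 2)}
           (parity_encode ((n + 1) div 2) (\<lambda>c. {q. fst q < n \<and> snd q = 0 \<and> fst q div 2 = c}))"
proof (rule parity_code_is_ic_solution[where ch = "\<lambda>i l. i div 2"])
  fix c show "finite {q. fst q < n \<and> snd q = 0 \<and> fst q div 2 = c}"
    by (rule finite_subset[of _ "{0..<n} \<times> {0}"]) auto
next
  fix i l assume "i < n" "l < (1::nat)"
  moreover note cycle_graph_same_half[of i n]
  moreover have "i div 2 < (n + 1) div 2" using \<open>i < n\<close> by presburger
  ultimately show "i div 2 < (n + 1) div 2 \<and> (i, l) \<in> {q. fst q < n \<and> snd q = 0 \<and> fst q div 2 = i div 2} \<and>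
      (\<forall>q\<in>{q. fst q < n \<and> snd q = 0 \<and> fst q div 2 = i div 2}. q \<noteq> (i, l) \<longrightarrow> cycle_graph n i (fst q))"
    by auto
qed

text \<open>With two bits per vertex, codeword bit \<open>c\<close> is the sum of the high bit of \<open>x c\<close> and the
  low bit of \<open>x (c + 1)\<close>; each receiver knows the other summand of two of these bits.\<close>
lemma cycle_graph_shift_code:
  assumes "3 \<le> n"
  shows "is_ic_solution n (cycle_graph n) 2 {0..<2^n} (parity_encode n (\<lambda>c. {(c, 1), ((c + 1) mod n, 0)}))"
proof (rule parity_code_is_ic_solution[where ch = "\<lambda>i l. if l = 0 then (i + n - 1) mod n else i"])
  fix i l assume i: "i < n" and "l < (2::nat)"
  have "((i + n - 1) mod n + 1) mod n = i"
  proof -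
    have "((i + n - 1) mod n + 1) mod n = (i + n - 1 + 1) mod n" by (rule mod_add_left_eq)
    also have "i + n - 1 + 1 = i + n" using assms by simp
    finally show ?thesis using i by simp
  qed
  then show "(if l = 0 then (i + n - 1) mod n else i) < n \<and>
       (i, l) \<in> {(if l = 0 then (i + n - 1) mod n else i, 1), (((if l = 0 then (i + n - 1) mod n else i) + 1) mod n, 0)} \<and>
       (\<forall>q\<in>{(if l = 0 then (i + n - 1) mod n else i, 1), (((if l = 0 then (i + n - 1) mod n else i) + 1) mod n, 0)}.
           q \<noteq> (i, l) \<longrightarrow> cycle_graph n i (fst q))"
    using cycle_graph_succ[OF i assms] cycle_graph_pred[OF i assms] i \<open>l < 2\<close> by (cases "l = 0") auto
qed simp

definition cycle_colour :: "nat \<Rightarrow> nat \<Rightarrow> nat" where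
  "cycle_colour n i = (if odd n \<and> i = n - 1 then 2 else i mod 2)"

lemma cycle_colour_less: "cycle_colour n i < (if even n then 2 else 3)"
  unfolding cycle_colour_def by auto

lemma cycle_colour_proper:
  assumes "cycle_graph n i j"
  shows "cycle_colour n i \<noteq> cycle_colour n j"
proof -
  have "i \<noteq> j" using assms unfolding cycle_graph_def by simp
  then show ?thesis
    using cycle_graph_cases[OF assms] unfolding cycle_colour_def by (cases "even n") (auto, presburger+)
qed

text \<open>One parity bit per colour class of a proper colouring of \<open>C\<^sub>n\<close>, i.e. per clique of the
  complement.\<close>
lemma compl_cycle_graph_colour_code:
  shows "is_ic_solution n (compl_graph n (cycle_graph n)) 1 {0..<2^(if even n then 2 else 3)}
           (parity_encode (if even n then 2 else 3) (\<lambda>c. {q. fst q < n \<and> snd q = 0 \<and> cycle_colour n (fst q) = c}))"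
proof (rule parity_code_is_ic_solution[where ch = "\<lambda>i l. cycle_colour n i"])
  fix c show "finite {q. fst q < n \<and> snd q = 0 \<and> cycle_colour n (fst q) = c}"
    by (rule finite_subset[of _ "{0..<n} \<times> {0}"]) auto
next
  fix i l assume "i < n" "l < (1::nat)"
  moreover have "compl_graph n (cycle_graph n) i j" if "j < n" "cycle_colour n j = cycle_colour n i" "j \<noteq> i" for j
    unfolding compl_graph_def using that \<open>i < n\<close> cycle_colour_proper[of n i j] by auto
  ultimately show "cycle_colour n i < (if even n then 2 else 3) \<and>
      (i, l) \<in> {q. fst q < n \<and> snd q = 0 \<and> cycle_colour n (fst q) = cycle_colour n i} \<and>
      (\<forall>q\<in>{q. fst q < n \<and> snd q = 0 \<and> cycle_colour n (fst q) = cycle_colour n i}.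
          q \<noteq> (i, l) \<longrightarrow> compl_graph n (cycle_graph n) i (fst q))"
    using cycle_colour_less[of n i] by auto
qed

text \<open>For \<open>n = 2 m + 1\<close> and \<open>t = m\<close>: codeword bit \<open>c\<close> is the sum of the bits \<open>l\<close> of
  \<open>x (c + 2 l)\<close> for \<open>l < m\<close>; the vertices \<open>c, c + 2, \<dots>, c + 2 (m - 1)\<close> are pairwise
  non-adjacent in \<open>C\<^sub>n\<close>.\<close>
lemma compl_cycle_graph_progression_code:
  assumes n: "n = 2 * m + 1"
  shows "is_ic_solution n (compl_graph n (cycle_graph n)) m {0..<2^n}
           (parity_encode n (\<lambda>c. (\<lambda>l. ((c + 2 * l) mod n, l)) ` {..<m}))"
proof (rule parity_code_is_ic_solution[where ch = "\<lambda>i l. (i + 2 * (n - l)) mod n"])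
  fix i l assume i: "i < n" and l: "l < m"
  define c where "c = (i + 2 * (n - l)) mod n"
  have "(c + 2 * l) mod n = (i + 2 * (n - l) + 2 * l) mod n"
    unfolding c_def by (rule mod_add_left_eq)
  also have "i + 2 * (n - l) + 2 * l = i + n * 2" using l n by simp
  finally have c_l: "(c + 2 * l) mod n = i" using i by simp
  then have "compl_graph n (cycle_graph n) i ((c + 2 * l') mod n)" if "l' < m" "l' \<noteq> l" for l'
    using compl_cycle_graph_progression[OF n l that(1)] that(2) by metis
  then show "(i + 2 * (n - l)) mod n < n \<and> (i, l) \<in> (\<lambda>l'. (((i + 2 * (n - l)) mod n + 2 * l') mod n, l')) ` {..<m} \<and>
       (\<forall>q\<in>(\<lambda>l'. (((i + 2 * (n - l)) mod n + 2 * l') mod n, l')) ` {..<m}.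
           q \<noteq> (i, l) \<longrightarrow> compl_graph n (cycle_graph n) i (fst q))"
    unfolding c_def[symmetric] using c_l l n by (auto simp: c_def intro!: image_eqI[of _ _ l])
qed simp

section \<open>Independence numbers\<close>

lemma alpha_eqI:
  assumes "indep_set n G S" "card S = k"
    and "\<And>S. indep_set n G S \<Longrightarrow> card S \<le> k"
  shows "alpha n G = k"
  unfolding alpha_def
proof (rule Max_eqI)
  have "{S. indep_set n G S} \<subseteq> Pow {0..<n}" unfolding indep_set_def by auto
  then show "finite (card ` {S. indep_set n G S})" by (simp add: finite_subset)
qed (use assms in auto)

lemma alpha_cycle_graph:
  assumes "4 \<le> n"
  shows "alpha n (cycle_graph n) = n div 2"
proof (rule alpha_eqI)
  let ?S = "(\<lambda>j. 2 * j) ` {..<n div 2}"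
  show "indep_set n (cycle_graph n) ?S"
    unfolding indep_set_def
  proof (intro conjI ballI)
    fix i j assume "i \<in> ?S" "j \<in> ?S"
    then show "\<not> cycle_graph n i j" using cycle_graph_cases[of n i j] by auto presburger+
  qed auto
  show "card ?S = n div 2" by (simp add: card_image inj_on_def)
next
  fix S assume "indep_set n (cycle_graph n) S"
  then have S: "S \<subseteq> {0..<n}" and indep: "\<forall>i\<in>S. \<forall>j\<in>S. \<not> cycle_graph n i j"
    unfolding indep_set_def by auto
  let ?succ = "\<lambda>i. (i + 1) mod n"
  text \<open>\<open>S\<close> and its rotation by one are disjoint subsets of the \<open>n\<close> vertices.\<close>
  have "inj_on ?succ S"
    using inj_on_cyclic_progression[of n 1 n 1] S unfolding lessThan_atLeast0
    by (simp add: add.commute inj_on_subset)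
  then have "card (?succ ` S) = card S" by (rule card_image)
  moreover have "S \<inter> ?succ ` S = {}"
  proof (rule ccontr)
    assume "S \<inter> ?succ ` S \<noteq> {}"
    then obtain i where "i \<in> S" "?succ i \<in> S" by auto
    moreover have "cycle_graph n i (?succ i)" using cycle_graph_succ \<open>i \<in> S\<close> S assms by auto
    ultimately show False using indep by blast
  qed
  moreover have "S \<union> ?succ ` S \<subseteq> {0..<n}" using S assms by auto
  then have "card (S \<union> ?succ ` S) \<le> n" using card_mono[of "{0..<n}"] by fastforce
  ultimately have "2 * card S \<le> n"
    using finite_subset[OF S] by (simp add: card_Un_disjoint)
  then show "card S \<le> n div 2" by simp
qed

lemma cycle_graph_triangle_free:
  assumes "4 \<le> n" "cycle_graph n a b" "cycle_graph n b c" "cycle_graph n a c"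
  shows False
proof -
  obtain e1 e2 e3 where e: "e1 \<in> {1, -1}" "e2 \<in> {1, -1}" "e3 \<in> {1, -1}"
    and d: "int n dvd int b - int a - e1" "int n dvd int c - int b - e2" "int n dvd int c - int a - e3"
    using cycle_graph_imp_dvd assms(2-4) by (metis diff_minus_eq_add insert_iff)
  have "int n dvd (int b - int a - e1) + (int c - int b - e2) - (int c - int a - e3)"
    by (rule dvd_diff[OF dvd_add[OF d(1,2)] d(3)])
  then have "int n dvd e3 - e1 - e2" by (simp add: algebra_simps)
  moreover have "\<bar>e3 - e1 - e2\<bar> < int n" using e assms(1) by auto
  ultimately have "e3 - e1 - e2 = 0" by (rule dvd_imp_eq_0_if_abs_less)
  then show False using e by auto
qed

lemma alpha_compl_cycle_graph:
  assumes "4 \<le> n"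
  shows "alpha n (compl_graph n (cycle_graph n)) = 2"
proof (rule alpha_eqI)
  show "indep_set n (compl_graph n (cycle_graph n)) {0, 1}"
    unfolding indep_set_def compl_graph_def cycle_graph_def using assms by auto
next
  fix S assume "indep_set n (compl_graph n (cycle_graph n)) S"
  then have adj: "cycle_graph n i j" if "i \<in> S" "j \<in> S" "i \<noteq> j" for i j
    using that unfolding indep_set_def compl_graph_def by (meson atLeastLessThan_iff subsetD)
  show "card S \<le> 2"
  proof (rule ccontr)
    assume "\<not> card S \<le> 2"
    then have "3 \<le> card S" by simp
    then obtain T where "T \<subseteq> S" "card T = 3" by (meson obtain_subset_with_card_n)
    then obtain a b c where "a \<in> S" "b \<in> S" "c \<in> S" "a \<noteq> b" "b \<noteq> c" "a \<noteq> c"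
      by (auto simp: card_3_iff)
    then show False using cycle_graph_triangle_free[OF assms] adj by metis
  qed
qed simp

section \<open>Broadcast rates\<close>

lemma ic_decoding_of_solution:
  assumes "is_ic_solution n G t P E"
  obtains D where "ic_decoding n G t P E D"
  using assms unfolding is_ic_solution_def ic_decoding_def by blast

lemma beta_t_ge:
  assumes "0 < t" and bound: "\<And>P E. is_ic_solution n G t P E \<Longrightarrow> L \<le> log 2 (real (card P))"
  shows "L \<le> real (beta_t n G t)"
proof -
  have "\<exists>k P E. is_ic_solution n G t P E \<and> k = nat \<lceil>log 2 (real (card P))\<rceil>"
    using is_ic_solution_uncoded[OF \<open>0 < t\<close>] by blast
  then have "\<exists>P E. is_ic_solution n G t P E \<and> beta_t n G t = nat \<lceil>log 2 (real (card P))\<rceil>"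
    unfolding beta_t_def by (rule LeastI_ex)
  then obtain P E where sol: "is_ic_solution n G t P E"
    and beta: "beta_t n G t = nat \<lceil>log 2 (real (card P))\<rceil>" by blast
  have "E ` messages n t \<subseteq> P" "finite P" using sol unfolding is_ic_solution_def by auto
  then have "card P > 0" using messages_nonempty by (metis card_gt_0_iff image_is_empty subset_empty)
  then have "0 \<le> log 2 (real (card P))" by simp
  then show ?thesis using bound[OF sol] unfolding beta by linarith
qed

lemma beta_t_cycle_graph_ge:
  assumes "4 \<le> n" "0 < t"
  shows "real t * real n / 2 \<le> real (beta_t n (cycle_graph n) t)"
proof (rule beta_t_ge[OF \<open>0 < t\<close>])
  fix P E assume "is_ic_solution n (cycle_graph n) t P E"
  then obtain D where ic: "ic_decoding n (cycle_graph n) t P E D" by (rule ic_decoding_of_solution)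
  have "real t * real n / 2 \<le> ic_decoding.code_ent n t E"
  proof (cases "even n")
    case True
    then obtain m where "n = 2 * m" by blast
    with assms show ?thesis using ic_decoding.code_ent_ge_even_cycle[OF ic refl, of m] by simp
  next
    case False
    then obtain m where "n = 2 * m + 1" using oddE by blast
    with assms show ?thesis using ic_decoding.code_ent_ge_odd_cycle[OF ic refl, of m] by simp
  qed
  then show "real t * real n / 2 \<le> log 2 (real (card P))"
    using ic_decoding.code_ent_le_log_card[OF ic] by linarith
qed

lemma beta_t_compl_cycle_graph_ge:
  assumes "4 \<le> n" "0 < t"
  shows "real t * real n / real (n div 2) \<le> real (beta_t n (compl_graph n (cycle_graph n)) t)"
proof (rule beta_t_ge[OF \<open>0 < t\<close>])
  fix P E assume "is_ic_solution n (compl_graph n (cycle_graph n)) t P E"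
  then obtain D where ic: "ic_decoding n (compl_graph n (cycle_graph n)) t P E D"
    by (rule ic_decoding_of_solution)
  have "real t * real n / real (n div 2) \<le> ic_decoding.code_ent n t E"
  proof (cases "even n")
    case True
    then obtain m where "n = 2 * m" by blast
    with assms show ?thesis using ic_decoding.code_ent_ge_even_compl_cycle[OF ic refl, of m] by simp
  next
    case False
    then obtain m where "n = 2 * m + 1" using oddE by blast
    with assms show ?thesis using ic_decoding.code_ent_ge_odd_compl_cycle[OF ic refl, of m] by simp
  qed
  then show "real t * real n / real (n div 2) \<le> log 2 (real (card P))"
    using ic_decoding.code_ent_le_log_card[OF ic] by linarith
qed

lemma beta_eqI:
  assumes "\<And>t. 1 \<le> t \<Longrightarrow> c \<le> real (beta_t n G t) / real t"
    and "1 \<le> t\<^sub>0" "real (beta_t n G t\<^sub>0) / real t\<^sub>0 \<le> c"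
  shows "beta n G = c"
proof -
  have "bdd_below ((\<lambda>t. real (beta_t n G t) / real t) ` {1..})"
    by (rule bdd_belowI[of _ 0]) auto
  then have "beta n G \<le> real (beta_t n G t\<^sub>0) / real t\<^sub>0"
    unfolding beta_def by (rule cINF_lower) (use assms in auto)
  moreover have "c \<le> beta n G"
    unfolding beta_def by (rule cINF_greatest) (use assms in auto)
  ultimately show ?thesis using assms by linarith
qed

lemma beta_cycle_graph:
  assumes "4 \<le> n"
  shows "beta n (cycle_graph n) = real n / 2"
proof (rule beta_eqI[where t\<^sub>0 = 2])
  fix t :: nat assume "1 \<le> t"
  then show "real n / 2 \<le> real (beta_t n (cycle_graph n) t) / real t"
    using beta_t_cycle_graph_ge[OF assms, of t] by (simp add: field_simps)
next
  show "real (beta_t n (cycle_graph n) 2) / real (2::nat) \<le> real n / 2"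
    using beta_t_le[OF cycle_graph_shift_code, of n] assms by simp
qed simp

lemma beta_compl_cycle_graph:
  assumes "4 \<le> n"
  shows "beta n (compl_graph n (cycle_graph n)) = real n / real (n div 2)"
proof -
  have lower: "real n / real (n div 2) \<le> real (beta_t n (compl_graph n (cycle_graph n)) t) / real t"
    if "1 \<le> t" for t
    using beta_t_compl_cycle_graph_ge[OF assms, of t] that by (simp add: field_simps)
  show ?thesis
  proof (cases "even n")
    case True
    then have "real n / real (n div 2) = 2" using assms by auto
    moreover have "beta_t n (compl_graph n (cycle_graph n)) 1 \<le> 2"
      using beta_t_le[OF compl_cycle_graph_colour_code, of n] True by simp
    ultimately show ?thesis using lower by (intro beta_eqI[where t\<^sub>0 = 1]) auto
  next
    case False
    then obtain m where n: "n = 2 * m + 1" using oddE by blast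
    then have "beta_t n (compl_graph n (cycle_graph n)) m \<le> n" "n div 2 = m" "1 \<le> m"
      using beta_t_le[OF compl_cycle_graph_progression_code[OF n]] assms by auto
    then show ?thesis
      using lower by (intro beta_eqI[where t\<^sub>0 = m]) (auto simp: divide_right_mono)
  qed
qed

lemma beta_t_1_cycle_graph:
  assumes "4 \<le> n"
  shows "beta_t n (cycle_graph n) 1 = (n + 1) div 2"
proof (rule antisym)
  show "beta_t n (cycle_graph n) 1 \<le> (n + 1) div 2"
    using assms by (intro beta_t_le[OF cycle_graph_pair_code]) simp
  have "real n / 2 \<le> real (beta_t n (cycle_graph n) 1)"
    using beta_t_cycle_graph_ge[OF assms, of 1] by simp
  then show "(n + 1) div 2 \<le> beta_t n (cycle_graph n) 1" by linarith
qed

lemma beta_t_1_compl_cycle_graph: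
  assumes "4 \<le> n"
  shows "beta_t n (compl_graph n (cycle_graph n)) 1 = (if even n then 2 else 3)"
proof (rule antisym)
  show "beta_t n (compl_graph n (cycle_graph n)) 1 \<le> (if even n then 2 else 3)"
    by (rule beta_t_le[OF compl_cycle_graph_colour_code])
  have lower: "real n / real (n div 2) \<le> real (beta_t n (compl_graph n (cycle_graph n)) 1)"
    using beta_t_compl_cycle_graph_ge[OF assms, of 1] by simp
  show "(if even n then 2 else 3) \<le> beta_t n (compl_graph n (cycle_graph n)) 1"
  proof (cases "even n")
    case True
    then have "2 \<le> real n / real (n div 2)" using assms by (auto elim!: evenE)
    then have "2 \<le> real (beta_t n (compl_graph n (cycle_graph n)) 1)" using lower by linarith
    then show ?thesis using True by simp
  next
    case False
    then have "2 < real n / real (n div 2)" using assms by (auto simp: field_simps elim!: oddE)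
    then have "2 < real (beta_t n (compl_graph n (cycle_graph n)) 1)" using lower by linarith
    then show ?thesis using False by simp
  qed
qed

lemma floor_ceiling_compl_ratio:
  assumes "4 \<le> n"
  shows "\<lfloor>real n / real (n div 2)\<rfloor> = 2"
    and "\<lceil>real n / real (n div 2)\<rceil> = (if even n then 2 else 3)"
proof -
  have "even n \<Longrightarrow> real n / real (n div 2) = 2" using assms by auto
  moreover have "odd n \<Longrightarrow> 2 < real n / real (n div 2) \<and> real n / real (n div 2) < 3"
    using assms by (auto simp: field_simps elim!: oddE)
  ultimately show "\<lfloor>real n / real (n div 2)\<rfloor> = 2"
    and "\<lceil>real n / real (n div 2)\<rceil> = (if even n then 2 else 3)"
    by (cases "even n"; simp add: floor_eq_iff ceiling_eq_iff)+
qed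

theorem theorem5p1:
  fixes n :: nat
  assumes "n \<ge> 4"
  shows "beta n (cycle_graph n) = real n / 2
       \<and> beta n (compl_graph n (cycle_graph n)) = real n / real (n div 2)
       \<and> real (beta_t n (cycle_graph n) 1) = real_of_int \<lceil>beta n (cycle_graph n)\<rceil>
       \<and> real (alpha n (cycle_graph n)) = real_of_int \<lfloor>beta n (cycle_graph n)\<rfloor>
       \<and> real (beta_t n (compl_graph n (cycle_graph n)) 1)
           = real_of_int \<lceil>beta n (compl_graph n (cycle_graph n))\<rceil>
       \<and> real (alpha n (compl_graph n (cycle_graph n)))
           = real_of_int \<lfloor>beta n (compl_graph n (cycle_graph n))\<rfloor>"
proof -
  have "\<lceil>real n / 2\<rceil> = int ((n + 1) div 2)" "\<lfloor>real n / 2\<rfloor> = int (n div 2)"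
    by (simp_all add: ceiling_eq_iff floor_eq_iff) linarith+
  then show ?thesis
    unfolding beta_cycle_graph[OF assms] beta_compl_cycle_graph[OF assms]
      beta_t_1_cycle_graph[OF assms] beta_t_1_compl_cycle_graph[OF assms]
      alpha_cycle_graph[OF assms] alpha_compl_cycle_graph[OF assms]
      floor_ceiling_compl_ratio[OF assms]
    by simp
qed

end
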